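(* Let $U_2$ be a unitary matrix with real entries having a unique (up to scalars) eigenvector $|\phi_0\rangle$ of eigenvalue $1$, chosen with real entries and norm $1$; let $|\mu\rangle$ be a unit vector with real entries, $U_1=I-2|\mu\rangle\langle\mu|$, $U=U_2U_1$, and $|\tilde\phi_0\rangle=|\phi_0\rangle-\langle\mu|\phi_0\rangle|\mu\rangle$. Let $\varepsilon\in(0,1)$. For every $T\ge\max\{1,\mathsf{QHT}_\varepsilon(U_2,|\mu\rangle)\}$, the procedure $\mathbf{Detect}(U,1/T,\varepsilon)$ accepts $|\tilde\phi_0\rangle$ with probability $\|\tilde\phi_0\|^2-O(\varepsilon)$ if $\langle\phi_0|\mu\rangle\ne0$, and accepts with probability $0$ otherwise. Moreover the number of applications of $\text{c-}U$ is $O(\log(1/\varepsilon)\cdot T)$.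
   Context: Decompose $|\tilde\phi_0\rangle$ in eigenvectors of the real unitary $U$: $|\tilde\phi_0\rangle=\delta_0|w_0\rangle+\sum_{1\le j\le J}\delta_j(|w_j^+\rangle+|w_j^-\rangle)+\delta_{-1}|w_{-1}\rangle$ with real coefficients, where $|w_0\rangle$ (resp. $|w_{-1}\rangle$) is a unit eigenvector of eigenvalue $1$ (resp. $-1$), and $|w_j^\pm\rangle$ are unit eigenvectors of eigenvalues $e^{\pm i\alpha_j}$, $0<\alpha_j<\pi$, with $|w_j^-\rangle=\overline{|w_j^+\rangle}$. $\mathit{QH}$ is the random variable equal to $1/\alpha_j$ with probability $2\delta_j^2$, to $1/\pi$ with probability $\delta_{-1}^2$, and to $0$ otherwise. The quantum $\varepsilon$-error $|\mu\rangle$-hitting time of $U_2$ is $\mathsf{QHT}_\varepsilon(U_2,|\mu\rangle)=\min\{y:\Pr[\mathit{QH}>y]\le\varepsilon\}$. "Accepts with probability $p$" on an unnormalized input means the accepting branch has squared norm $p$. $\mathbf{Estimate}$ is the standard phase estimation circuit for $U$ with precision $\Delta$ (on an eigenvector with eigenphase $\alpha\in(-\pi,\pi]$ it outputs $\alpha$ within $\Delta$ with error probability at most $1/3$, outputs $0$ with certainty on a $1$-eigenvector, and uses $O(1/\Delta)$ calls to $\text{c-}U$ and its inverse). $\mathbf{Detect}(U,\Delta,\varepsilon)$ on input $|\psi\rangle$: apply $\Theta(\log(1/\varepsilon))$ times $\mathbf{Estimate}$ with precision $\Delta$ to the same state $|\psi\rangle$; accept if at least one estimated phase is nonzero, otherwise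 reject. *)

theory Defs
  imports "Jordan_Normal_Form.Matrix" "HOL-Probability.Probability_Mass_Function"
begin

definition cvec :: "real Matrix.vec \<Rightarrow> complex Matrix.vec" where
  "cvec v = map_vec complex_of_real v"

definition cmat :: "real mat \<Rightarrow> complex mat" where
  "cmat A = map_mat complex_of_real A"

definition sqnorm :: "complex Matrix.vec \<Rightarrow> real" where
  "sqnorm v = (\<Sum>i<dim_vec v. (cmod (Matrix.vec_index v i))\<^sup>2)"

definition rsqnorm :: "real Matrix.vec \<Rightarrow> real" where
  "rsqnorm v = (\<Sum>i<dim_vec v. (Matrix.vec_index v i)\<^sup>2)"

definition eigspace :: "nat \<Rightarrow> complex mat \<Rightarrow> complex \<Rightarrow> complex Matrix.vec set" where
  "eigspace n A l = {v \<in> carrier_vec n. A *\<^sub>v v = l \<cdot>\<^sub>v v}"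

definition orth_proj :: "complex Matrix.vec set \<Rightarrow> complex Matrix.vec \<Rightarrow> complex Matrix.vec" where
  "orth_proj S x = (THE p. p \<in> S \<and> (\<forall>w\<in>S. (x - p) \<bullet>c w = 0))"

definition eigphases :: "nat \<Rightarrow> complex mat \<Rightarrow> real set" where
  "eigphases n A = {\<theta>. - pi < \<theta> \<and> \<theta> \<le> pi \<and> eigspace n A (cis \<theta>) \<noteq> {0\<^sub>v n}}"

definition spec_weight :: "nat \<Rightarrow> complex mat \<Rightarrow> complex Matrix.vec \<Rightarrow> real \<Rightarrow> real" where
  "spec_weight n A \<psi> \<theta> = sqnorm (orth_proj (eigspace n A (cis \<theta>)) \<psi>)"

definition U1 :: "nat \<Rightarrow> real Matrix.vec \<Rightarrow> real mat" where
  "U1 n \<mu> = 1\<^sub>m n - Matrix.mat n n (\<lambda>(i,j). 2 * (Matrix.vec_index \<mu> i) * (Matrix.vec_index \<mu> j))"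

definition phitilde :: "real Matrix.vec \<Rightarrow> real Matrix.vec \<Rightarrow> real Matrix.vec" where
  "phitilde \<phi>0 \<mu> = \<phi>0 - (scalar_prod \<mu> \<phi>0) \<cdot>\<^sub>v \<mu>"

text \<open>Pr[QH > y]: QH = 1/|theta| with probability equal to the squared norm of the
  component of phitilde on the eigenspace(s) of e^{+-i theta} (theta in (0,pi]),
  and QH = 0 otherwise.  Summing over both signs of theta gives 2 delta_j^2.\<close>
definition QH_tail :: "nat \<Rightarrow> complex mat \<Rightarrow> complex Matrix.vec \<Rightarrow> real \<Rightarrow> real" where
  "QH_tail n A \<psi> y = (\<Sum>\<theta>\<in>{\<theta> \<in> eigphases n A. \<theta> \<noteq> 0 \<and> 1 / \<bar>\<theta>\<bar> > y}. spec_weight n A \<psi> \<theta>)"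

definition QHT :: "nat \<Rightarrow> real mat \<Rightarrow> real Matrix.vec \<Rightarrow> real Matrix.vec \<Rightarrow> real \<Rightarrow> real" where
  "QHT n U2 \<mu> \<phi>0 \<epsilon> =
     Inf {y. 0 \<le> y \<and> QH_tail n (cmat (U2 * U1 n \<mu>)) (cvec (phitilde \<phi>0 \<mu>)) y \<le> \<epsilon>}"

definition circ_dist :: "real \<Rightarrow> real \<Rightarrow> real" where
  "circ_dist x y = min \<bar>x - y\<bar> (2 * pi - \<bar>x - y\<bar>)"

text \<open>Abstract specification of Estimate: est D theta is the output distribution
  (an estimate of the phase, in (-pi,pi]) on an eigenvector of eigenphase theta,
  with precision D; cnt D is the number of calls to c-U and its inverse.\<close>
definition is_phase_estimator :: "(real \<Rightarrow> real \<Rightarrow> real pmf) \<Rightarrow> (real \<Rightarrow> nat) \<Rightarrow> real \<Rightarrow> bool" where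
  "is_phase_estimator est cnt K \<longleftrightarrow>
     (\<forall>D>0. est D 0 = return_pmf 0 \<and> real (cnt D) \<le> K / D \<and>
        (\<forall>\<theta>. - pi < \<theta> \<and> \<theta> \<le> pi \<longrightarrow>
           set_pmf (est D \<theta>) \<subseteq> {-pi<..pi} \<and>
           measure_pmf.prob (est D \<theta>) {x. circ_dist x \<theta> < D} \<ge> 2/3))"

text \<open>Acceptance probability (squared norm of the accepting branch) of Detect with
  m repetitions of Estimate at precision D on the (possibly unnormalized) input psi:
  on the eigenspace of phase theta all m runs output 0 with probability
  (Pr[output = 0])^m, and eigenspace components do not interfere.\<close>
definition detect_accept :: "(real \<Rightarrow> real \<Rightarrow> real pmf) \<Rightarrow> nat \<Rightarrow> real \<Rightarrow> nat \<Rightarrow> complex mat \<Rightarrow> complex Matrix.vec \<Rightarrow> real" where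
  "detect_accept est m D n A \<psi> =
     (\<Sum>\<theta>\<in>eigphases n A. spec_weight n A \<psi> \<theta> * (1 - (pmf (est D \<theta>) 0) ^ m))"

definition detect_calls :: "(real \<Rightarrow> nat) \<Rightarrow> nat \<Rightarrow> real \<Rightarrow> nat" where
  "detect_calls cnt m D = m * cnt D"

end

theory Submission
  imports Defs "Jordan_Normal_Form.Jordan_Normal_Form_Existence"
begin

text \<open>The walk \<open>U = U\<^sub>2 U\<^sub>1\<close> is a product of real orthogonal matrices, hence an
  isometry of \<open>\<complex>\<^sup>n\<close>; all its Jordan blocks are trivial, so it has an orthogonal
  eigenbasis, and the squared norm of any vector splits over the eigenphases (Parseval).
  Detect accepts the component of phase \<open>\<theta>\<close> with probability
  \<open>1 - Pr[Estimate outputs 0]\<^sup>m\<close>.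
  If \<open>\<langle>\<mu>|\<phi>\<^sub>0\<rangle> = 0\<close>, then \<open>\<phi>\<^sub>0\<close> itself is fixed by \<open>U\<close>
  and is never accepted. Otherwise \<open>U\<close> has no eigenvalue 1, every phase with
  \<open>\<bar>\<theta>\<bar> \<ge> 1/T\<close> is missed with probability at most \<open>3\<^sup>-\<^sup>m \<le> \<epsilon>\<close>, and the phases
  with \<open>\<bar>\<theta>\<bar> < 1/T\<close> carry weight at most \<open>\<epsilon>\<close> because \<open>T\<close> exceeds the hitting time.\<close>

lemma cscalar_prod_smult_left:
  fixes x y :: "complex Matrix.vec"
  assumes "x \<in> carrier_vec n" "y \<in> carrier_vec n"
  shows "(a \<cdot>\<^sub>v x) \<bullet>c y = a * (x \<bullet>c y)"
  using assms by (simp add: scalar_prod_def sum_distrib_left algebra_simps)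

lemma cscalar_prod_smult_right:
  fixes x y :: "complex Matrix.vec"
  assumes "x \<in> carrier_vec n" "y \<in> carrier_vec n"
  shows "x \<bullet>c (b \<cdot>\<^sub>v y) = cnj b * (x \<bullet>c y)"
  using assms by (simp add: scalar_prod_def sum_distrib_left algebra_simps)

lemma cscalar_prod_add_left:
  fixes x y z :: "complex Matrix.vec"
  assumes "x \<in> carrier_vec n" "y \<in> carrier_vec n" "z \<in> carrier_vec n"
  shows "(x + y) \<bullet>c z = x \<bullet>c z + y \<bullet>c z"
  using assms by (simp add: scalar_prod_def sum.distrib algebra_simps)

lemma cscalar_prod_diff_left:
  fixes x y z :: "complex Matrix.vec"
  assumes "x \<in> carrier_vec n" "y \<in> carrier_vec n" "z \<in> carrier_vec n"
  shows "(x - y) \<bullet>c z = x \<bullet>c z - y \<bullet>c z"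
  using assms by (simp add: scalar_prod_def sum_subtractf algebra_simps)

lemma cscalar_prod_swap:
  fixes x y :: "complex Matrix.vec"
  assumes "x \<in> carrier_vec n" "y \<in> carrier_vec n"
  shows "x \<bullet>c y = cnj (y \<bullet>c x)"
  using assms by (simp add: scalar_prod_def cnj_sum mult.commute)

lemma cscalar_prod_self_eq_0:
  fixes x :: "complex Matrix.vec"
  assumes "x \<in> carrier_vec n"
  shows "x \<bullet>c x = 0 \<longleftrightarrow> x = 0\<^sub>v n"
  using assms conjugate_square_eq_0_vec by auto

lemma sqnorm_eq_cscalar_prod:
  assumes "v \<in> carrier_vec n"
  shows "complex_of_real (sqnorm v) = v \<bullet>c v"
proof -
  have "complex_of_real (sqnorm v) = (\<Sum>i<n. complex_of_real ((cmod (v $ i))\<^sup>2))"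
    using assms unfolding sqnorm_def by simp
  also have "\<dots> = v \<bullet>c v"
    using assms by (simp only: complex_norm_square) (simp add: scalar_prod_def lessThan_atLeast0)
  finally show ?thesis .
qed

lemma sqnorm_nonneg: "0 \<le> sqnorm v"
  unfolding sqnorm_def by (simp add: sum_nonneg)

lemma sqnorm_zero_vec [simp]: "sqnorm (0\<^sub>v n) = 0"
  unfolding sqnorm_def by simp

definition isometry_mat :: "nat \<Rightarrow> complex mat \<Rightarrow> bool" where
  "isometry_mat n A \<longleftrightarrow> A \<in> carrier_mat n n \<and>
     (\<forall>x\<in>carrier_vec n. \<forall>y\<in>carrier_vec n. (A *\<^sub>v x) \<bullet>c (A *\<^sub>v y) = x \<bullet>c y)"

lemma isometry_mat_carrier: "isometry_mat n A \<Longrightarrow> A \<in> carrier_mat n n"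
  unfolding isometry_mat_def by blast

lemma isometry_mat_cscalar_prod:
  "isometry_mat n A \<Longrightarrow> x \<in> carrier_vec n \<Longrightarrow> y \<in> carrier_vec n \<Longrightarrow>
     (A *\<^sub>v x) \<bullet>c (A *\<^sub>v y) = x \<bullet>c y"
  unfolding isometry_mat_def by blast

lemma isometry_mat_mult:
  assumes "isometry_mat n B" "isometry_mat n C"
  shows "isometry_mat n (B * C)"
proof -
  have B: "B \<in> carrier_mat n n" and C: "C \<in> carrier_mat n n"
    using assms isometry_mat_carrier by blast+
  have "((B * C) *\<^sub>v x) \<bullet>c ((B * C) *\<^sub>v y) = x \<bullet>c y"
    if "x \<in> carrier_vec n" "y \<in> carrier_vec n" for x y
    using that B C by (simp add: isometry_mat_cscalar_prod[OF assms(1)] isometry_mat_cscalar_prod[OF assms(2)])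
  then show ?thesis using B C unfolding isometry_mat_def by simp
qed

lemma isometry_eigenvalue_unit:
  assumes "isometry_mat n A" "x \<in> carrier_vec n" "x \<noteq> 0\<^sub>v n" "A *\<^sub>v x = a \<cdot>\<^sub>v x"
  shows "a * cnj a = 1"
proof -
  have "x \<bullet>c x = (a \<cdot>\<^sub>v x) \<bullet>c (a \<cdot>\<^sub>v x)"
    using isometry_mat_cscalar_prod[OF assms(1,2,2)] assms(4) by simp
  also have "\<dots> = a * cnj a * (x \<bullet>c x)"
    using assms(2) by (simp add: cscalar_prod_smult_left cscalar_prod_smult_right)
  finally have "(a * cnj a - 1) * (x \<bullet>c x) = 0" by (simp add: algebra_simps)
  then show ?thesis using assms(2,3) cscalar_prod_self_eq_0 by auto
qed

lemma isometry_eigenvectors_orthogonal: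
  assumes "isometry_mat n A" "x \<in> carrier_vec n" "y \<in> carrier_vec n"
    "A *\<^sub>v x = a \<cdot>\<^sub>v x" "A *\<^sub>v y = b \<cdot>\<^sub>v y" "a \<noteq> b"
  shows "x \<bullet>c y = 0"
proof (cases "y = 0\<^sub>v n")
  case True
  then show ?thesis using assms(2) by simp
next
  case False
  have b: "b * cnj b = 1" using isometry_eigenvalue_unit[OF assms(1,3) False assms(5)] .
  have "x \<bullet>c y = (a \<cdot>\<^sub>v x) \<bullet>c (b \<cdot>\<^sub>v y)"
    using isometry_mat_cscalar_prod[OF assms(1-3)] assms(4,5) by simp
  also have "\<dots> = a * cnj b * (x \<bullet>c y)"
    using assms(2,3) by (simp add: cscalar_prod_smult_left cscalar_prod_smult_right)
  finally have "(a * cnj b - b * cnj b) * (x \<bullet>c y) = 0" using b by (simp add: algebra_simps)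
  moreover have "a * cnj b \<noteq> b * cnj b"
    using assms(6) b by (metis mult_cancel_right mult_zero_left zero_neq_one)
  ultimately show ?thesis by simp
qed

text \<open>This excludes Jordan blocks of size two, which is what makes an isometry diagonalisable.\<close>

lemma isometry_no_Jordan_chain:
  assumes "isometry_mat n A" "p \<in> carrier_vec n" "q \<in> carrier_vec n" "p \<noteq> 0\<^sub>v n"
    "A *\<^sub>v p = a \<cdot>\<^sub>v p" "A *\<^sub>v q = s \<cdot>\<^sub>v p + a \<cdot>\<^sub>v q"
  shows "s = 0"
proof -
  have a: "a * cnj a = 1" using isometry_eigenvalue_unit[OF assms(1,2,4,5)] .
  have "q \<bullet>c p = (s \<cdot>\<^sub>v p + a \<cdot>\<^sub>v q) \<bullet>c (a \<cdot>\<^sub>v p)"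
    using isometry_mat_cscalar_prod[OF assms(1,3,2)] assms(5,6) by simp
  also have "\<dots> = s * cnj a * (p \<bullet>c p) + a * cnj a * (q \<bullet>c p)"
    using assms(2,3) by (simp add: cscalar_prod_add_left[of _ n] cscalar_prod_smult_left
        cscalar_prod_smult_right)
  finally have "s * cnj a * (p \<bullet>c p) = 0" using a by simp
  moreover have "p \<bullet>c p \<noteq> 0" using assms(2,4) cscalar_prod_self_eq_0 by blast
  moreover have "cnj a \<noteq> 0" using a by auto
  ultimately show ?thesis by simp
qed

lemma jordan_matrix_nonzero_entry:
  fixes n_as :: "(nat \<times> 'a::{zero,one}) list"
  assumes "i < sum_list (map fst n_as)" "j < sum_list (map fst n_as)"
    "jordan_matrix n_as $$ (i,j) \<noteq> 0"
  shows "j = i \<or> (j = Suc i \<and> jordan_matrix n_as $$ (i,i) = jordan_matrix n_as $$ (j,j))"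
  using assms
proof (induct n_as arbitrary: i j)
  case Nil
  then show ?case by simp
next
  case (Cons na n_as)
  obtain k a where na: "na = (k,a)" by force
  let ?N = "sum_list (map fst n_as)"
  have e: "\<And>i j. i < k + ?N \<Longrightarrow> j < k + ?N \<Longrightarrow> jordan_matrix ((k,a) # n_as) $$ (i,j) =
    (if i < k then if j < k then jordan_block k a $$ (i,j) else 0
     else if j < k then 0 else jordan_matrix n_as $$ (i - k, j - k))"
    unfolding jordan_matrix_Cons by (subst index_mat_four_block, auto)
  from Cons.prems have i: "i < k + ?N" and j: "j < k + ?N" by (auto simp: na)
  show ?case
  proof (cases "i < k")
    case True
    then show ?thesis using Cons.prems e[OF i j] e[OF i i] e[OF j j] i j
      by (auto simp: na split: if_splits)
  next
    case False
    then have jk: "\<not> j < k" using Cons.prems e[OF i j] by (auto simp: na split: if_splits)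
    have "j - k = i - k \<or> (j - k = Suc (i - k) \<and>
        jordan_matrix n_as $$ (i-k,i-k) = jordan_matrix n_as $$ (j-k,j-k))"
      using Cons.hyps[of "i-k" "j-k"] Cons.prems e[OF i j] False jk i j by (auto simp: na)
    then show ?thesis using False jk e[OF i j] e[OF i i] e[OF j j] by (auto simp: na)
  qed
qed

lemma mult_mat_vec_col_bidiagonal:
  fixes P J :: "'a::comm_ring_1 mat"
  assumes P: "P \<in> carrier_mat n n" and J: "J \<in> carrier_mat n n" and j: "j < n"
    and bidiag: "\<And>k. k < n \<Longrightarrow> J $$ (k,j) \<noteq> 0 \<Longrightarrow> k = j \<or> Suc k = j"
  shows "P *\<^sub>v col J j =
    J $$ (j,j) \<cdot>\<^sub>v col P j + (if j = 0 then 0\<^sub>v n else J $$ (j-1,j) \<cdot>\<^sub>v col P (j-1))"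
proof (rule eq_vecI)
  fix i assume "i < dim_vec (J $$ (j,j) \<cdot>\<^sub>v col P j +
      (if j = 0 then 0\<^sub>v n else J $$ (j-1,j) \<cdot>\<^sub>v col P (j-1)))"
  then have i: "i < n" using P by (auto split: if_splits)
  let ?S = "if j = 0 then {j} else {j, j - 1}"
  have "(P *\<^sub>v col J j) $ i = (\<Sum>k<n. P $$ (i,k) * J $$ (k,j))"
    using P J i j by (simp add: scalar_prod_def lessThan_atLeast0)
  also have "\<dots> = (\<Sum>k\<in>?S. P $$ (i,k) * J $$ (k,j))"
  proof (rule sum.mono_neutral_right)
    show "\<forall>k\<in>{..<n} - ?S. P $$ (i,k) * J $$ (k,j) = 0"
      using bidiag by (cases j) fastforce+
  qed (use j in auto)
  also have "\<dots> = (J $$ (j,j) \<cdot>\<^sub>v col P j +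
      (if j = 0 then 0\<^sub>v n else J $$ (j-1,j) \<cdot>\<^sub>v col P (j-1))) $ i"
    using P i j by (cases j) (auto simp: mult.commute)
  finally show "(P *\<^sub>v col J j) $ i = (J $$ (j,j) \<cdot>\<^sub>v col P j +
      (if j = 0 then 0\<^sub>v n else J $$ (j-1,j) \<cdot>\<^sub>v col P (j-1))) $ i" .
qed (use P in auto)

lemma jordan_basis_exists:
  fixes A :: "complex mat"
  assumes A: "A \<in> carrier_mat n n"
  obtains P Q J where "P \<in> carrier_mat n n" "Q \<in> carrier_mat n n"
    "P * Q = 1\<^sub>m n" "Q * P = 1\<^sub>m n"
    "\<And>j. j < n \<Longrightarrow> A *\<^sub>v col P j =
       J $$ (j,j) \<cdot>\<^sub>v col P j + (if j = 0 then 0\<^sub>v n else J $$ (j-1,j) \<cdot>\<^sub>v col P (j-1))"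
    "\<And>j. j < n \<Longrightarrow> J $$ (j,Suc j) \<noteq> 0 \<Longrightarrow> Suc j < n \<Longrightarrow> J $$ (j,j) = J $$ (Suc j,Suc j)"
proof -
  obtain as where "char_poly A = (\<Prod>a\<leftarrow>as. [:- a, 1:])" using char_poly_factorized[OF A] by blast
  from jordan_nf_exists[OF A this] obtain n_as where "jordan_nf A n_as" by blast
  then obtain P Q where wit: "similar_mat_wit A (jordan_matrix n_as) P Q"
    unfolding jordan_nf_def similar_mat_def by blast
  define J where "J = jordan_matrix n_as"
  from wit A have P: "P \<in> carrier_mat n n" and Q: "Q \<in> carrier_mat n n"
    and J: "J \<in> carrier_mat n n" and PQ: "P * Q = 1\<^sub>m n" and QP: "Q * P = 1\<^sub>m n"
    and AJ: "A = P * J * Q"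
    unfolding similar_mat_wit_def J_def Let_def by auto
  have "sum_list (map fst n_as) = n"
    using J unfolding J_def by (metis carrier_matD(1) jordan_matrix_dim(1))
  then have entry: "\<And>i j. i < n \<Longrightarrow> j < n \<Longrightarrow> J $$ (i,j) \<noteq> 0 \<Longrightarrow>
      j = i \<or> (j = Suc i \<and> J $$ (i,i) = J $$ (j,j))"
    using jordan_matrix_nonzero_entry unfolding J_def by metis
  have "A * P = P * J * (Q * P)" using AJ P J Q by (simp add: assoc_mult_mat[of _ n n _ n _ n])
  then have AP: "A * P = P * J" using P J QP by simp
  have "A *\<^sub>v col P j = J $$ (j,j) \<cdot>\<^sub>v col P j +
      (if j = 0 then 0\<^sub>v n else J $$ (j-1,j) \<cdot>\<^sub>v col P (j-1))" if j: "j < n" for j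
  proof -
    have "k = j \<or> Suc k = j" if "k < n" "J $$ (k,j) \<noteq> 0" for k
      using entry[OF that(1) j that(2)] by auto
    from mult_mat_vec_col_bidiagonal[OF P J j this] show ?thesis
      using col_mult2[OF A P j] col_mult2[OF P J j] AP by simp
  qed
  moreover have "J $$ (j,j) = J $$ (Suc j,Suc j)" if "J $$ (j,Suc j) \<noteq> 0" "Suc j < n" for j
    using entry[of j "Suc j"] that by auto
  ultimately show ?thesis using that P Q PQ QP by blast
qed

locale eigenbasis =
  fixes n :: nat and A P Q :: "complex mat" and d :: "nat \<Rightarrow> complex"
  assumes isometry: "isometry_mat n A"
    and P: "P \<in> carrier_mat n n" and Q: "Q \<in> carrier_mat n n" and PQ: "P * Q = 1\<^sub>m n"
    and eigenvector: "\<And>j. j < n \<Longrightarrow> A *\<^sub>v col P j = d j \<cdot>\<^sub>v col P j"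
    and col_nonzero: "\<And>j. j < n \<Longrightarrow> col P j \<noteq> 0\<^sub>v n"

lemma isometry_has_eigenbasis:
  assumes iso: "isometry_mat n A"
  obtains P Q d where "eigenbasis n A P Q d"
proof -
  obtain P Q J where P: "P \<in> carrier_mat n n" and Q: "Q \<in> carrier_mat n n"
    and PQ: "P * Q = 1\<^sub>m n" and QP: "Q * P = 1\<^sub>m n"
    and col_AP: "\<And>j. j < n \<Longrightarrow> A *\<^sub>v col P j =
       J $$ (j,j) \<cdot>\<^sub>v col P j + (if j = 0 then 0\<^sub>v n else J $$ (j-1,j) \<cdot>\<^sub>v col P (j-1))"
    and same: "\<And>j. j < n \<Longrightarrow> J $$ (j,Suc j) \<noteq> 0 \<Longrightarrow> Suc j < n \<Longrightarrow> J $$ (j,j) = J $$ (Suc j,Suc j)"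
    using jordan_basis_exists[OF isometry_mat_carrier[OF iso]] by metis
  define d where "d j = J $$ (j,j)" for j
  have nonzero: "col P j \<noteq> 0\<^sub>v n" if j: "j < n" for j
  proof
    assume "col P j = 0\<^sub>v n"
    then have "(Q * P) $$ (j,j) = 0" using Q P j by (simp add: index_mult_mat)
    then show False using QP j by simp
  qed
  have no_chain: "j = 0 \<or> J $$ (j-1, j) = 0" if "j < n" for j
    using that
  proof (induct j)
    case (Suc j)
    show ?case
    proof (rule ccontr)
      assume "\<not> (Suc j = 0 \<or> J $$ (Suc j - 1, Suc j) = 0)"
      then have s: "J $$ (j, Suc j) \<noteq> 0" by simp
      have ej: "A *\<^sub>v col P j = d j \<cdot>\<^sub>v col P j"
        using Suc col_AP[of j] P unfolding d_def by auto
      have ej': "A *\<^sub>v col P (Suc j) = J $$ (j, Suc j) \<cdot>\<^sub>v col P j + d j \<cdot>\<^sub>v col P (Suc j)"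
        using Suc.prems col_AP[of "Suc j"] P same[OF _ s] unfolding d_def
        by (simp, subst comm_add_vec[of _ n]) auto
      have "J $$ (j, Suc j) = 0"
        using isometry_no_Jordan_chain[OF iso _ _ nonzero[of j] ej ej'] P Suc.prems by auto
      then show False using s by simp
    qed
  qed simp
  have "A *\<^sub>v col P j = d j \<cdot>\<^sub>v col P j" if "j < n" for j
    using col_AP[OF that] no_chain[OF that] P that unfolding d_def by auto
  with iso P Q PQ nonzero have "eigenbasis n A P Q d" by unfold_locales
  then show ?thesis by (rule that)
qed

lemma eigphases_bounds:
  assumes "\<theta> \<in> eigphases n A"
  shows "- pi < \<theta>" "\<theta> \<le> pi"
  using assms unfolding eigphases_def by simp_all

lemma orth_proj_unique:
  assumes S: "S \<subseteq> carrier_vec n" "\<And>a b. a \<in> S \<Longrightarrow> b \<in> S \<Longrightarrow> a - b \<in> S"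
    and p: "p \<in> S" and x: "x \<in> carrier_vec n" and orth: "\<And>w. w \<in> S \<Longrightarrow> (x - p) \<bullet>c w = 0"
  shows "orth_proj S x = p"
  unfolding orth_proj_def
proof (rule the_equality)
  show "p \<in> S \<and> (\<forall>w\<in>S. (x - p) \<bullet>c w = 0)" using p orth by auto
  fix q assume q: "q \<in> S \<and> (\<forall>w\<in>S. (x - q) \<bullet>c w = 0)"
  have pc: "p \<in> carrier_vec n" and qc: "q \<in> carrier_vec n" using p q S by auto
  have pq: "p - q \<in> S" using S p q by auto
  have "p - q = (x - q) - (x - p)" by (intro eq_vecI) (use pc qc x in auto)
  then have "(p - q) \<bullet>c (p - q) = (x - q) \<bullet>c (p - q) - (x - p) \<bullet>c (p - q)"
    using pc qc x by (simp add: cscalar_prod_diff_left[of _ n])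
  also have "\<dots> = 0" using q orth[OF pq] pq by auto
  finally have "p - q = 0\<^sub>v n" using cscalar_prod_self_eq_0[of "p - q" n] pc qc by auto
  then have "(p - q) $ i = 0" if "i < n" for i using that by simp
  then show "q = p" using pc qc by (auto simp: vec_eq_iff)
qed

lemma eigspace_subset_carrier: "eigspace n A l \<subseteq> carrier_vec n"
  unfolding eigspace_def by auto

lemma zero_in_eigspace: "A \<in> carrier_mat n n \<Longrightarrow> 0\<^sub>v n \<in> eigspace n A l"
  unfolding eigspace_def by auto

lemma eigspace_diff_closed:
  assumes A: "A \<in> carrier_mat n n" and "a \<in> eigspace n A l" "b \<in> eigspace n A l"
  shows "a - b \<in> eigspace n A l"
proof -
  have a: "a \<in> carrier_vec n" "A *\<^sub>v a = l \<cdot>\<^sub>v a" and b: "b \<in> carrier_vec n" "A *\<^sub>v b = l \<cdot>\<^sub>v b"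
    using assms(2,3) unfolding eigspace_def by auto
  have "A *\<^sub>v (a - b) = l \<cdot>\<^sub>v (a - b)"
    using mult_minus_distrib_mat_vec[OF A a(1) b(1)] a b
    by (intro eq_vecI) (auto simp: algebra_simps)
  then show ?thesis unfolding eigspace_def using a b by auto
qed

lemma orth_proj_eigspace_of_eigenvector:
  assumes iso: "isometry_mat n A" and v: "v \<in> eigspace n A l'" and l: "l \<noteq> l'"
  shows "orth_proj (eigspace n A l) v = 0\<^sub>v n"
proof -
  have A: "A \<in> carrier_mat n n" using iso isometry_mat_carrier by blast
  have vc: "v \<in> carrier_vec n" and Av: "A *\<^sub>v v = l' \<cdot>\<^sub>v v" using v unfolding eigspace_def by auto
  show ?thesis
  proof (rule orth_proj_unique[OF eigspace_subset_carrier eigspace_diff_closed[OF A]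
        zero_in_eigspace[OF A] vc])
    fix w assume "w \<in> eigspace n A l"
    then have "w \<in> carrier_vec n" "A *\<^sub>v w = l \<cdot>\<^sub>v w" unfolding eigspace_def by auto
    then show "(v - 0\<^sub>v n) \<bullet>c w = 0"
      using isometry_eigenvectors_orthogonal[OF iso vc _ Av] l vc by simp
  qed
qed

context eigenbasis
begin

definition comb :: "(nat \<Rightarrow> complex) \<Rightarrow> nat set \<Rightarrow> complex Matrix.vec" where
  "comb c S = Matrix.vec n (\<lambda>i. \<Sum>j\<in>S. c j * P $$ (i,j))"

lemma A_carrier: "A \<in> carrier_mat n n"
  using isometry isometry_mat_carrier by blast

lemma col_P_carrier: "j < n \<Longrightarrow> col P j \<in> carrier_vec n"
  using P by auto

lemma comb_carrier [simp]: "comb c S \<in> carrier_vec n"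
  by (simp add: comb_def)

lemma comb_cscalar_prod:
  assumes S: "S \<subseteq> {..<n}" and w: "w \<in> carrier_vec n"
  shows "comb c S \<bullet>c w = (\<Sum>j\<in>S. c j * (col P j \<bullet>c w))"
proof -
  have "comb c S \<bullet>c w = (\<Sum>i<n. \<Sum>j\<in>S. c j * (P $$ (i,j) * cnj (w $ i)))"
    using w by (auto simp: scalar_prod_def lessThan_atLeast0 comb_def sum_distrib_right
        mult.assoc intro!: sum.cong)
  also have "\<dots> = (\<Sum>j\<in>S. \<Sum>i<n. c j * (P $$ (i,j) * cnj (w $ i)))" by (rule sum.swap)
  also have "\<dots> = (\<Sum>j\<in>S. c j * (col P j \<bullet>c w))"
    using w P S by (auto simp: scalar_prod_def lessThan_atLeast0 sum_distrib_left
        intro!: sum.cong)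
  finally show ?thesis .
qed

lemma comb_cscalar_prod_comb:
  assumes S: "S \<subseteq> {..<n}" and T: "T \<subseteq> {..<n}"
  shows "comb c S \<bullet>c comb e T =
    (\<Sum>j\<in>S. \<Sum>k\<in>T. c j * cnj (e k) * (col P j \<bullet>c col P k))"
proof -
  have "col P j \<bullet>c comb e T = (\<Sum>k\<in>T. cnj (e k) * (col P j \<bullet>c col P k))" if j: "j < n" for j
  proof -
    have "col P j \<bullet>c comb e T = cnj (\<Sum>k\<in>T. e k * (col P k \<bullet>c col P j))"
      using cscalar_prod_swap[OF col_P_carrier[OF j] comb_carrier] comb_cscalar_prod[OF T]
        col_P_carrier[OF j] by simp
    also have "\<dots> = (\<Sum>k\<in>T. cnj (e k) * (col P j \<bullet>c col P k))"
      unfolding cnj_sum using T cscalar_prod_swap[OF col_P_carrier[OF j] col_P_carrier]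
      by (intro sum.cong) auto
    finally show ?thesis .
  qed
  then show ?thesis
    using comb_cscalar_prod[OF S] S by (auto simp: sum_distrib_left mult.assoc intro!: sum.cong)
qed

lemma comb_eigenvector:
  assumes S: "S \<subseteq> {j. j < n \<and> d j = l}"
  shows "A *\<^sub>v comb c S = l \<cdot>\<^sub>v comb c S"
proof (rule eq_vecI)
  fix i assume "i < dim_vec (l \<cdot>\<^sub>v comb c S)"
  then have i: "i < n" by (simp add: comb_def)
  have col: "(\<Sum>k<n. A $$ (i,k) * P $$ (k,j)) = d j * P $$ (i,j)" if j: "j < n" for j
    using arg_cong[OF eigenvector[OF j], of "\<lambda>v. v $ i"] A_carrier P i j
    by (simp add: scalar_prod_def lessThan_atLeast0)
  have "(A *\<^sub>v comb c S) $ i = (\<Sum>k<n. \<Sum>j\<in>S. c j * (A $$ (i,k) * P $$ (k,j)))"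
    using A_carrier i by (auto simp: scalar_prod_def lessThan_atLeast0 comb_def sum_distrib_left
        mult.left_commute intro!: sum.cong)
  also have "\<dots> = (\<Sum>j\<in>S. c j * (\<Sum>k<n. A $$ (i,k) * P $$ (k,j)))"
    by (subst sum.swap) (simp add: sum_distrib_left)
  also have "\<dots> = (\<Sum>j\<in>S. l * (c j * P $$ (i,j)))"
    using S col by (intro sum.cong) auto
  also have "\<dots> = (l \<cdot>\<^sub>v comb c S) $ i" using i by (simp add: comb_def sum_distrib_left)
  finally show "(A *\<^sub>v comb c S) $ i = (l \<cdot>\<^sub>v comb c S) $ i" .
qed (use A_carrier in \<open>simp add: comb_def\<close>)

lemma comb_coordinates:
  assumes v: "v \<in> carrier_vec n"
  shows "comb (\<lambda>j. (Q *\<^sub>v v) $ j) {..<n} = v"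
proof -
  have "v = P *\<^sub>v (Q *\<^sub>v v)" using PQ P Q v by (simp flip: assoc_mult_mat_vec)
  also have "\<dots> = comb (\<lambda>j. (Q *\<^sub>v v) $ j) {..<n}"
    using P Q v by (intro eq_vecI)
      (auto simp: comb_def scalar_prod_def lessThan_atLeast0 mult.commute intro!: sum.cong)
  finally show ?thesis by simp
qed

lemma comb_diff:
  assumes "S \<subseteq> {..<n}"
  shows "comb c {..<n} - comb c S = comb c ({..<n} - S)"
proof (rule eq_vecI)
  fix i assume "i < dim_vec (comb c ({..<n} - S))"
  then show "(comb c {..<n} - comb c S) $ i = comb c ({..<n} - S) $ i"
    using sum.subset_diff[OF assms finite_lessThan, of "\<lambda>j. c j * P $$ (i,j)"]
    by (simp add: comb_def)
qed (simp add: comb_def)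

lemma orth_proj_eigspace:
  assumes v: "v \<in> carrier_vec n"
  shows "orth_proj (eigspace n A l) v = comb (\<lambda>j. (Q *\<^sub>v v) $ j) {j. j < n \<and> d j = l}"
proof (rule orth_proj_unique[OF eigspace_subset_carrier eigspace_diff_closed[OF A_carrier] _ v])
  let ?c = "\<lambda>j. (Q *\<^sub>v v) $ j"
  let ?S = "{j. j < n \<and> d j = l}"
  show "comb ?c ?S \<in> eigspace n A l" unfolding eigspace_def using comb_eigenvector[of ?S] by auto
  fix w assume "w \<in> eigspace n A l"
  then have w: "w \<in> carrier_vec n" and Aw: "A *\<^sub>v w = l \<cdot>\<^sub>v w" unfolding eigspace_def by auto
  have "v - comb ?c ?S = comb ?c ({..<n} - ?S)"
    using comb_coordinates[OF v] comb_diff[of ?S ?c] by auto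
  then have "(v - comb ?c ?S) \<bullet>c w = (\<Sum>j\<in>{..<n} - ?S. ?c j * (col P j \<bullet>c w))"
    using comb_cscalar_prod[OF _ w] by auto
  also have "\<dots> = 0"
    using isometry_eigenvectors_orthogonal[OF isometry col_P_carrier w eigenvector Aw]
    by (intro sum.neutral) auto
  finally show "(v - comb ?c ?S) \<bullet>c w = 0" .
qed

lemma eigenvalue_eq_cis_Arg: "j < n \<Longrightarrow> d j = cis (Arg (d j))"
proof -
  assume j: "j < n"
  have "d j * cnj (d j) = 1"
    by (rule isometry_eigenvalue_unit[OF isometry col_P_carrier[OF j] col_nonzero[OF j] eigenvector[OF j]])
  then have "(cmod (d j))\<^sup>2 = 1"
    by (metis complex_norm_square of_real_eq_1_iff)
  then have "cmod (d j) = 1"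
    by (smt (verit) norm_ge_zero power2_eq_1_iff)
  then have "d j \<noteq> 0" by auto
  then show ?thesis using cis_Arg[of "d j"] \<open>cmod (d j) = 1\<close> by (simp add: sgn_eq)
qed

lemma Arg_eigenvalue_in_eigphases: "j < n \<Longrightarrow> Arg (d j) \<in> eigphases n A"
proof -
  assume j: "j < n"
  have "col P j \<in> eigspace n A (cis (Arg (d j)))"
    using eigenvector[OF j] col_P_carrier[OF j] eigenvalue_eq_cis_Arg[OF j]
    unfolding eigspace_def by auto
  then show ?thesis
    using col_nonzero[OF j] Arg_bounded[of "d j"] unfolding eigphases_def by auto
qed

lemma eigenvalue_eq_cis_iff:
  assumes j: "j < n" and \<theta>: "\<theta> \<in> eigphases n A"
  shows "d j = cis \<theta> \<longleftrightarrow> Arg (d j) = \<theta>"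
proof -
  have "- pi < \<theta>" "\<theta> \<le> pi" using eigphases_bounds[OF \<theta>] by auto
  then show ?thesis
    using eigenvalue_eq_cis_Arg[OF j] cis_Arg_unique[of "cis \<theta>" \<theta>] by auto
qed

lemma eigphases_subset_Arg_eigenvalues: "eigphases n A \<subseteq> (\<lambda>j. Arg (d j)) ` {..<n}"
proof
  fix \<theta> assume \<theta>: "\<theta> \<in> eigphases n A"
  then obtain v where v: "v \<in> eigspace n A (cis \<theta>)" "v \<noteq> 0\<^sub>v n"
    using zero_in_eigspace[OF A_carrier] unfolding eigphases_def by blast
  then have vc: "v \<in> carrier_vec n" and Av: "A *\<^sub>v v = cis \<theta> \<cdot>\<^sub>v v"
    unfolding eigspace_def by auto
  show "\<theta> \<in> (\<lambda>j. Arg (d j)) ` {..<n}"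
  proof (rule ccontr)
    assume "\<theta> \<notin> (\<lambda>j. Arg (d j)) ` {..<n}"
    then have "d j \<noteq> cis \<theta>" if "j < n" for j
      using eigenvalue_eq_cis_iff[OF that \<theta>] that by auto
    then have "(\<Sum>j<n. (Q *\<^sub>v v) $ j * (col P j \<bullet>c v)) = 0"
      using isometry_eigenvectors_orthogonal[OF isometry col_P_carrier vc eigenvector Av]
      by (intro sum.neutral) auto
    then have "v \<bullet>c v = 0"
      using comb_cscalar_prod[of "{..<n}" v "\<lambda>j. (Q *\<^sub>v v) $ j"] comb_coordinates[OF vc] vc
      by simp
    then show False using cscalar_prod_self_eq_0[OF vc] v(2) by blast
  qed
qed

lemma finite_eigphases: "finite (eigphases n A)"
  using eigphases_subset_Arg_eigenvalues finite_surj by blast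

text \<open>Parseval's identity over the eigenspaces: columns of P for different eigenvalues are
  orthogonal, so grouping the double sum for the squared norm of v by eigenphase gives the
  spectral weights.\<close>

lemma sum_spec_weight:
  assumes v: "v \<in> carrier_vec n"
  shows "(\<Sum>\<theta>\<in>eigphases n A. spec_weight n A v \<theta>) = sqnorm v"
proof -
  let ?c = "\<lambda>j. (Q *\<^sub>v v) $ j"
  define H where "H j = (\<Sum>k<n. ?c j * cnj (?c k) * (col P j \<bullet>c col P k))" for j
  define S where "S \<theta> = {j. j < n \<and> d j = cis \<theta>}" for \<theta>
  have orth: "col P j \<bullet>c col P k = 0" if "j < n" "k < n" "d j \<noteq> d k" for j k
    using isometry_eigenvectors_orthogonal[OF isometry col_P_carrier col_P_carrier
        eigenvector eigenvector] that by blast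
  have weight: "complex_of_real (spec_weight n A v \<theta>) = (\<Sum>j\<in>S \<theta>. H j)"
    if \<theta>: "\<theta> \<in> eigphases n A" for \<theta>
  proof -
    have "complex_of_real (spec_weight n A v \<theta>) = comb ?c (S \<theta>) \<bullet>c comb ?c (S \<theta>)"
      unfolding spec_weight_def orth_proj_eigspace[OF v] S_def
      by (rule sqnorm_eq_cscalar_prod[of _ n]) simp
    also have "\<dots> = (\<Sum>j\<in>S \<theta>. \<Sum>k\<in>S \<theta>. ?c j * cnj (?c k) * (col P j \<bullet>c col P k))"
      by (rule comb_cscalar_prod_comb) (auto simp: S_def)
    also have "\<dots> = (\<Sum>j\<in>S \<theta>. H j)"
      unfolding H_def using orth by (intro sum.cong[OF refl] sum.mono_neutral_left) (auto simp: S_def, metis)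
    finally show ?thesis .
  qed
  have "complex_of_real (\<Sum>\<theta>\<in>eigphases n A. spec_weight n A v \<theta>)
      = (\<Sum>\<theta>\<in>eigphases n A. \<Sum>j\<in>{j \<in> {..<n}. Arg (d j) = \<theta>}. H j)"
    unfolding of_real_sum using weight eigenvalue_eq_cis_iff
    by (intro sum.cong refl) (auto simp: S_def intro!: sum.cong)
  also have "\<dots> = (\<Sum>j<n. H j)"
    by (rule sum.group) (use finite_eigphases Arg_eigenvalue_in_eigphases in auto)
  also have "\<dots> = comb ?c {..<n} \<bullet>c comb ?c {..<n}"
    unfolding H_def by (rule comb_cscalar_prod_comb[symmetric]) auto
  also have "\<dots> = complex_of_real (sqnorm v)"
    using comb_coordinates[OF v] sqnorm_eq_cscalar_prod[OF v] by simp
  finally show ?thesis by (simp only: of_real_eq_iff)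
qed

end

lemma isometry_finite_eigphases: "isometry_mat n A \<Longrightarrow> finite (eigphases n A)"
  by (metis isometry_has_eigenbasis eigenbasis.finite_eigphases)

lemma isometry_sum_spec_weight:
  "isometry_mat n A \<Longrightarrow> v \<in> carrier_vec n \<Longrightarrow>
     (\<Sum>\<theta>\<in>eigphases n A. spec_weight n A v \<theta>) = sqnorm v"
  by (metis isometry_has_eigenbasis eigenbasis.sum_spec_weight)

lemma cmat_carrier [simp]: "R \<in> carrier_mat n m \<Longrightarrow> cmat R \<in> carrier_mat n m"
  by (simp add: cmat_def)

lemma cvec_carrier [simp]: "v \<in> carrier_vec n \<Longrightarrow> cvec v \<in> carrier_vec n"
  by (simp add: cvec_def)

lemma cmat_mult: "R \<in> carrier_mat n k \<Longrightarrow> S \<in> carrier_mat k m \<Longrightarrow> cmat (R * S) = cmat R * cmat S"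
  unfolding cmat_def by (rule of_real_hom.mat_hom_mult)

lemma cmat_mult_cvec: "R \<in> carrier_mat n k \<Longrightarrow> v \<in> carrier_vec k \<Longrightarrow> cmat R *\<^sub>v cvec v = cvec (R *\<^sub>v v)"
  unfolding cmat_def cvec_def by (rule of_real_hom.mult_mat_vec_hom[symmetric])

lemma cmat_transpose: "cmat (transpose_mat R) = transpose_mat (cmat R)"
  by (intro eq_matI) (auto simp: cmat_def)

lemma cmat_one [simp]: "cmat (1\<^sub>m n) = 1\<^sub>m n"
  by (intro eq_matI) (auto simp: cmat_def)

lemma sqnorm_cvec: "sqnorm (cvec v) = rsqnorm v"
  unfolding sqnorm_def rsqnorm_def cvec_def by simp

lemma cvec_scalar_prod:
  "\<mu> \<in> carrier_vec n \<Longrightarrow> v \<in> carrier_vec n \<Longrightarrow> cvec \<mu> \<bullet> cvec v = complex_of_real (scalar_prod \<mu> v)"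
  unfolding scalar_prod_def cvec_def by simp

lemma cvec_cscalar_prod:
  "\<mu> \<in> carrier_vec n \<Longrightarrow> v \<in> carrier_vec n \<Longrightarrow> cvec \<mu> \<bullet>c cvec v = complex_of_real (scalar_prod \<mu> v)"
  unfolding scalar_prod_def cvec_def by simp

lemma conjugate_cmat_mult_vec:
  assumes "R \<in> carrier_mat n n" "y \<in> carrier_vec n"
  shows "conjugate (cmat R *\<^sub>v y) = cmat R *\<^sub>v conjugate y"
  using assms by (intro eq_vecI) (auto simp: cmat_def scalar_prod_def cnj_sum)

lemma orthogonal_cmat_isometry:
  assumes R: "R \<in> carrier_mat n n" and orth: "transpose_mat R * R = 1\<^sub>m n"
  shows "isometry_mat n (cmat R)"
  unfolding isometry_mat_def
proof (intro conjI ballI)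
  show "cmat R \<in> carrier_mat n n" using R by simp
  fix x y :: "complex Matrix.vec" assume x: "x \<in> carrier_vec n" and y: "y \<in> carrier_vec n"
  let ?y = "conjugate y"
  have cR: "cmat R \<in> carrier_mat n n" using R by simp
  have y': "?y \<in> carrier_vec n" using y by simp
  have "transpose_mat (cmat R) *\<^sub>v (cmat R *\<^sub>v ?y) = cmat (transpose_mat R * R) *\<^sub>v ?y"
    using R y' by (simp add: cmat_mult[of _ n n] cmat_transpose assoc_mult_mat_vec[of _ n n _ n])
  also have "\<dots> = ?y" using orth y' by simp
  finally have "(cmat R *\<^sub>v ?y) \<bullet> (cmat R *\<^sub>v x) = ?y \<bullet> x"
    using transpose_vec_mult_scalar[OF cR x, of "cmat R *\<^sub>v ?y"] y' cR by simp
  then show "(cmat R *\<^sub>v x) \<bullet>c (cmat R *\<^sub>v y) = x \<bullet>c y"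
    using conjugate_cmat_mult_vec[OF R y] cR x y'
    by (metis comm_scalar_prod mult_mat_vec_carrier)
qed

lemma U1_dims [simp]: "dim_row (U1 n \<mu>) = n" "dim_col (U1 n \<mu>) = n"
  by (simp_all add: U1_def)

lemma U1_carrier [simp]: "U1 n \<mu> \<in> carrier_mat n n"
  by (rule carrier_matI) simp_all

lemma U1_index:
  "i < n \<Longrightarrow> j < n \<Longrightarrow> U1 n \<mu> $$ (i,j) = (if i = j then 1 else 0) - 2 * \<mu> $ i * \<mu> $ j"
  by (simp add: U1_def)

lemma U1_orthogonal:
  assumes \<mu>: "\<mu> \<in> carrier_vec n" "rsqnorm \<mu> = 1"
  shows "transpose_mat (U1 n \<mu>) * U1 n \<mu> = 1\<^sub>m n"
proof (rule eq_matI)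
  fix j k assume "j < dim_row (1\<^sub>m n :: real mat)" "k < dim_col (1\<^sub>m n :: real mat)"
  then have j: "j < n" and k: "k < n" by auto
  have norm: "(\<Sum>i<n. \<mu> $ i * \<mu> $ i) = 1"
    using \<mu> unfolding rsqnorm_def by (simp add: power2_eq_square)
  have "(transpose_mat (U1 n \<mu>) * U1 n \<mu>) $$ (j,k) = (\<Sum>i<n. U1 n \<mu> $$ (i,j) * U1 n \<mu> $$ (i,k))"
    using j k by (auto simp: scalar_prod_def lessThan_atLeast0 intro!: sum.cong)
  also have "\<dots> = (\<Sum>i<n. (if i = j then (if i = k then 1 else 0) - 2 * \<mu> $ i * \<mu> $ k else 0)
      - (if i = k then 2 * \<mu> $ i * \<mu> $ j else 0) + 4 * (\<mu> $ j * \<mu> $ k) * (\<mu> $ i * \<mu> $ i))"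
    using j k by (intro sum.cong refl) (auto simp: U1_index algebra_simps)
  also have "\<dots> = (1\<^sub>m n) $$ (j,k)"
    using j k norm by (simp add: sum.distrib sum_subtractf flip: sum_distrib_left)
  finally show "(transpose_mat (U1 n \<mu>) * U1 n \<mu>) $$ (j,k) = (1\<^sub>m n) $$ (j,k)" .
qed auto

lemma cmat_U1_mult_vec:
  assumes \<mu>: "\<mu> \<in> carrier_vec n" and x: "x \<in> carrier_vec n"
  shows "cmat (U1 n \<mu>) *\<^sub>v x = x - (2 * (cvec \<mu> \<bullet> x)) \<cdot>\<^sub>v cvec \<mu>"
proof (rule eq_vecI)
  fix i assume "i < dim_vec (x - (2 * (cvec \<mu> \<bullet> x)) \<cdot>\<^sub>v cvec \<mu>)"
  then have i: "i < n" using \<mu> by (simp add: cvec_def)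
  have "(cmat (U1 n \<mu>) *\<^sub>v x) $ i = (\<Sum>k<n. (if k = i then x $ k else 0)
      - 2 * complex_of_real (\<mu> $ i) * (complex_of_real (\<mu> $ k) * x $ k))"
    using x i by (auto simp: scalar_prod_def lessThan_atLeast0 cmat_def U1_index
        algebra_simps intro!: sum.cong)
  also have "\<dots> = (x - (2 * (cvec \<mu> \<bullet> x)) \<cdot>\<^sub>v cvec \<mu>) $ i"
    using x \<mu> i by (simp add: sum_subtractf cvec_def scalar_prod_def lessThan_atLeast0
        flip: sum_distrib_left)
  finally show "(cmat (U1 n \<mu>) *\<^sub>v x) $ i = (x - (2 * (cvec \<mu> \<bullet> x)) \<cdot>\<^sub>v cvec \<mu>) $ i" .
qed (use \<mu> in \<open>simp add: cmat_def cvec_def\<close>)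

lemma rsqnorm_phitilde:
  assumes "\<mu> \<in> carrier_vec n" "\<phi> \<in> carrier_vec n" "rsqnorm \<mu> = 1" "rsqnorm \<phi> = 1"
  shows "rsqnorm (phitilde \<phi> \<mu>) = 1 - (scalar_prod \<mu> \<phi>)\<^sup>2"
proof -
  let ?a = "scalar_prod \<mu> \<phi>"
  have a: "?a = (\<Sum>i<n. \<mu> $ i * \<phi> $ i)"
    using assms unfolding scalar_prod_def by (simp add: lessThan_atLeast0)
  have "rsqnorm (phitilde \<phi> \<mu>) = (\<Sum>i<n. (\<phi> $ i)\<^sup>2 - 2 * ?a * (\<mu> $ i * \<phi> $ i) + ?a\<^sup>2 * (\<mu> $ i)\<^sup>2)"
    using assms unfolding rsqnorm_def phitilde_def
    by (auto simp: power2_eq_square algebra_simps intro!: sum.cong)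
  also have "\<dots> = 1 - ?a\<^sup>2"
    using assms unfolding rsqnorm_def
    by (simp add: sum.distrib sum_subtractf power2_eq_square flip: sum_distrib_left a)
  finally show ?thesis .
qed

lemma QH_tail_antimono:
  assumes "finite (eigphases n A)" "y \<le> y'"
  shows "QH_tail n A \<psi> y' \<le> QH_tail n A \<psi> y"
  unfolding QH_tail_def spec_weight_def
  using assms by (intro sum_mono2) (auto simp: sqnorm_nonneg)

lemma QH_tail_eventually_zero:
  assumes "finite (eigphases n A)"
  obtains y where "0 \<le> y" "QH_tail n A \<psi> y = 0"
proof
  let ?y = "Max (insert 0 ((\<lambda>\<theta>. 1 / \<bar>\<theta>\<bar>) ` eigphases n A))"
  show "0 \<le> ?y" using assms by simp
  show "QH_tail n A \<psi> ?y = 0"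
    unfolding QH_tail_def using assms by (intro sum.neutral) (auto simp: Max_ge_iff)
qed

lemma QH_tail_locally_const_right:
  assumes fin: "finite (eigphases n A)"
  obtains \<delta> where "0 < \<delta>" "\<And>y. T \<le> y \<Longrightarrow> y < T + \<delta> \<Longrightarrow> QH_tail n A \<psi> y = QH_tail n A \<psi> T"
proof
  define B where "B = {\<theta> \<in> eigphases n A. \<theta> \<noteq> 0 \<and> 1 / \<bar>\<theta>\<bar> > T}"
  define \<delta> where "\<delta> = Min (insert 1 ((\<lambda>\<theta>. 1 / \<bar>\<theta>\<bar> - T) ` B))"
  have finB: "finite B" using fin unfolding B_def by simp
  show "0 < \<delta>" unfolding \<delta>_def using finB by (auto simp: B_def)
  fix y assume y: "T \<le> y" "y < T + \<delta>"
  have "\<delta> \<le> 1 / \<bar>\<theta>\<bar> - T" if "\<theta> \<in> B" for \<theta> unfolding \<delta>_def using finB that by simp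
  then have "{\<theta> \<in> eigphases n A. \<theta> \<noteq> 0 \<and> 1 / \<bar>\<theta>\<bar> > y} = B"
    using y unfolding B_def by fastforce
  then show "QH_tail n A \<psi> y = QH_tail n A \<psi> T" unfolding QH_tail_def B_def by simp
qed

text \<open>By right-continuity of the tail, the infimum defining the hitting time is attained.\<close>

lemma QH_tail_le_of_Inf_le:
  assumes fin: "finite (eigphases n A)" and \<epsilon>: "0 \<le> \<epsilon>"
    and T: "Inf {y. 0 \<le> y \<and> QH_tail n A \<psi> y \<le> \<epsilon>} \<le> T"
  shows "QH_tail n A \<psi> T \<le> \<epsilon>"
proof -
  let ?Y = "{y. 0 \<le> y \<and> QH_tail n A \<psi> y \<le> \<epsilon>}"
  obtain y0 where "0 \<le> y0" "QH_tail n A \<psi> y0 = 0" using QH_tail_eventually_zero[OF fin] .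
  then have Y: "?Y \<noteq> {}" using \<epsilon> by auto
  obtain \<delta> where \<delta>: "0 < \<delta>" "\<And>y. T \<le> y \<Longrightarrow> y < T + \<delta> \<Longrightarrow> QH_tail n A \<psi> y = QH_tail n A \<psi> T"
    using QH_tail_locally_const_right[OF fin] by blast
  obtain y where y: "y \<in> ?Y" "y < T + \<delta>"
    using cInf_lessD[OF Y, of "T + \<delta>"] T \<delta>(1) by auto
  show ?thesis
  proof (cases "y \<le> T")
    case True
    then show ?thesis using y(1) QH_tail_antimono[OF fin True, of \<psi>] by simp
  next
    case False
    then show ?thesis using y \<delta>(2)[of y] by simp
  qed
qed

lemma estimate_prob_0_le:
  assumes pe: "is_phase_estimator est cnt K" and D: "0 < D"
    and \<theta>: "- pi < \<theta>" "\<theta> \<le> pi" and far: "D \<le> \<bar>\<theta>\<bar>"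
  shows "pmf (est D \<theta>) 0 \<le> 1/3"
proof -
  let ?S = "{x. circ_dist x \<theta> < D}"
  have "measure_pmf.prob (est D \<theta>) ?S \<ge> 2/3"
    using pe D \<theta> unfolding is_phase_estimator_def by blast
  moreover have "0 \<notin> ?S" using \<theta> far by (auto simp: circ_dist_def min_def)
  then have "measure_pmf.prob (est D \<theta>) ({0} \<union> ?S) =
      measure_pmf.prob (est D \<theta>) {0} + measure_pmf.prob (est D \<theta>) ?S"
    by (intro measure_pmf.finite_measure_Union) auto
  moreover have "measure_pmf.prob (est D \<theta>) ({0} \<union> ?S) \<le> 1" by (rule measure_pmf.prob_le_1)
  ultimately show ?thesis by (simp add: measure_pmf_single)
qed

lemma power_le_of_le_one_third:
  fixes q \<epsilon> :: real
  assumes q: "0 \<le> q" "q \<le> 1/3" and \<epsilon>: "0 < \<epsilon>" and m: "ln (1/\<epsilon>) \<le> real m"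
  shows "q ^ m \<le> \<epsilon>"
proof -
  have "exp 1 \<le> (3::real)" using exp_le by simp
  then have "1/3 \<le> exp (-1::real)" by (simp add: exp_minus field_simps)
  then have "q ^ m \<le> exp (-1) ^ m" using q by (intro power_mono) auto
  also have "\<dots> = exp (- real m)" by (simp flip: exp_of_nat_mult)
  also have "\<dots> \<le> exp (ln \<epsilon>)" using m \<epsilon> by (subst exp_le_cancel_iff) (simp add: ln_div)
  finally show ?thesis using \<epsilon> by simp
qed

lemma estimate_miss_prob_le:
  assumes pe: "is_phase_estimator est cnt K" and D: "0 < D" and \<theta>: "\<theta> \<in> eigphases n A"
    and far: "\<theta> \<noteq> 0" "\<not> 1 / \<bar>\<theta>\<bar> > 1 / D"
    and \<epsilon>: "0 < \<epsilon>" and m: "ln (1/\<epsilon>) \<le> real m"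
  shows "pmf (est D \<theta>) 0 ^ m \<le> \<epsilon>"
proof -
  have "inverse \<bar>\<theta>\<bar> \<le> inverse D" using far(2) by (simp add: inverse_eq_divide)
  then have "D \<le> \<bar>\<theta>\<bar>" using inverse_le_iff_le[of "\<bar>\<theta>\<bar>" D] D far(1) by simp
  then have "pmf (est D \<theta>) 0 \<le> 1/3"
    by (rule estimate_prob_0_le[OF pe D eigphases_bounds[OF \<theta>]])
  then show ?thesis by (rule power_le_of_le_one_third[OF pmf_nonneg _ \<epsilon> m])
qed

lemma phase_estimator_const_nonneg:
  assumes "is_phase_estimator est cnt K"
  shows "0 \<le> K"
proof -
  have "real (cnt 1) \<le> K / 1"
    using assms[unfolded is_phase_estimator_def, rule_format, of 1] by simp
  then show ?thesis by (simp add: order_trans)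
qed

lemma detect_calls_le:
  assumes "is_phase_estimator est cnt K" "0 < T" "real m \<le> L"
  shows "real (detect_calls cnt m (1 / T)) \<le> K * L * T"
proof -
  have "real (cnt (1 / T)) \<le> K * T"
    using assms(1,2) unfolding is_phase_estimator_def by (metis divide_divide_eq_right
        div_by_1 zero_less_divide_1_iff)
  then have "real m * real (cnt (1 / T)) \<le> L * (K * T)"
    using assms(3) phase_estimator_const_nonneg[OF assms(1)] assms(2)
    by (intro mult_mono) auto
  then show ?thesis unfolding detect_calls_def by (simp add: ac_simps)
qed

text \<open>On the eigenspace of 1 every run of Estimate outputs 0, so Detect never accepts.\<close>

lemma detect_accept_eigspace_1:
  assumes pe: "is_phase_estimator est cnt K" and D: "0 < D" and iso: "isometry_mat n A"
    and \<psi>: "\<psi> \<in> eigspace n A 1"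
  shows "detect_accept est m D n A \<psi> = 0"
  unfolding detect_accept_def
proof (intro sum.neutral ballI)
  fix \<theta> assume "\<theta> \<in> eigphases n A"
  then have \<theta>: "- pi < \<theta>" "\<theta> \<le> pi" by (rule eigphases_bounds)+
  show "spec_weight n A \<psi> \<theta> * (1 - pmf (est D \<theta>) 0 ^ m) = 0"
  proof (cases "\<theta> = 0")
    case True
    then show ?thesis using pe D unfolding is_phase_estimator_def by simp
  next
    case False
    then have "cis \<theta> \<noteq> 1" using \<theta> cis_Arg_unique[of 1 \<theta>] by auto
    then show ?thesis
      using orth_proj_eigspace_of_eigenvector[OF iso \<psi>] unfolding spec_weight_def by simp
  qed
qed

text \<open>Phases with \<open>\<bar>\<theta>\<bar> \<ge> D\<close> are missed by all \<open>m\<close> runs with probability at most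
  \<open>\<epsilon>\<close>; the remaining nonzero phases carry total weight \<open>QH_tail n A \<psi> (1/D)\<close>.\<close>

lemma detect_accept_approx:
  assumes pe: "is_phase_estimator est cnt K" and D: "0 < D" and iso: "isometry_mat n A"
    and \<psi>: "\<psi> \<in> carrier_vec n" and no_0: "0 \<notin> eigphases n A"
    and \<epsilon>: "0 < \<epsilon>" and m: "ln (1/\<epsilon>) \<le> real m" and tail: "QH_tail n A \<psi> (1/D) \<le> \<epsilon>"
  shows "\<bar>detect_accept est m D n A \<psi> - sqnorm \<psi>\<bar> \<le> \<epsilon> * (1 + sqnorm \<psi>)"
proof -
  let ?E = "eigphases n A"
  define w where "w \<theta> = spec_weight n A \<psi> \<theta>" for \<theta>
  define q where "q \<theta> = pmf (est D \<theta>) 0 ^ m" for \<theta>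
  have fin: "finite ?E" using isometry_finite_eigphases[OF iso] .
  have w: "0 \<le> w \<theta>" for \<theta> unfolding w_def spec_weight_def by (rule sqnorm_nonneg)
  have q: "0 \<le> q \<theta>" "q \<theta> \<le> 1" for \<theta> unfolding q_def by (simp_all add: pmf_le_1 power_le_one)
  have "detect_accept est m D n A \<psi> = (\<Sum>\<theta>\<in>?E. w \<theta> - w \<theta> * q \<theta>)"
    unfolding detect_accept_def w_def q_def by (simp add: right_diff_distrib)
  then have deficit: "sqnorm \<psi> - detect_accept est m D n A \<psi> = (\<Sum>\<theta>\<in>?E. w \<theta> * q \<theta>)"
    using isometry_sum_spec_weight[OF iso \<psi>] unfolding w_def by (simp add: sum_subtractf)
  have "w \<theta> * q \<theta> \<le> \<epsilon> * w \<theta> + (if \<theta> \<noteq> 0 \<and> 1 / \<bar>\<theta>\<bar> > 1/D then w \<theta> else 0)"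
    if "\<theta> \<in> ?E" for \<theta>
  proof (cases "\<theta> \<noteq> 0 \<and> 1 / \<bar>\<theta>\<bar> > 1/D")
    case True
    have "w \<theta> * q \<theta> \<le> w \<theta>" by (rule mult_left_le[OF q(2) w])
    moreover have "0 \<le> \<epsilon> * w \<theta>" using \<epsilon> w[of \<theta>] by simp
    ultimately show ?thesis unfolding if_P[OF True] by linarith
  next
    case False
    have "\<theta> \<noteq> 0" using that no_0 by auto
    then have "q \<theta> \<le> \<epsilon>" unfolding q_def using estimate_miss_prob_le[OF pe D that _ _ \<epsilon> m] False by blast
    then have "w \<theta> * q \<theta> \<le> w \<theta> * \<epsilon>" by (rule mult_left_mono[OF _ w])
    then show ?thesis unfolding if_not_P[OF False] by (simp add: mult.commute)
  qed
  then have "(\<Sum>\<theta>\<in>?E. w \<theta> * q \<theta>) \<le>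
      (\<Sum>\<theta>\<in>?E. \<epsilon> * w \<theta> + (if \<theta> \<noteq> 0 \<and> 1 / \<bar>\<theta>\<bar> > 1/D then w \<theta> else 0))"
    by (rule sum_mono)
  also have "\<dots> = \<epsilon> * (\<Sum>\<theta>\<in>?E. w \<theta>) + QH_tail n A \<psi> (1/D)"
    unfolding QH_tail_def sum.inter_filter[OF fin] w_def by (simp only: sum.distrib sum_distrib_left)
  also have "\<dots> \<le> \<epsilon> * sqnorm \<psi> + \<epsilon>"
    using tail isometry_sum_spec_weight[OF iso \<psi>] unfolding w_def by simp
  finally have "sqnorm \<psi> - detect_accept est m D n A \<psi> \<le> \<epsilon> * (1 + sqnorm \<psi>)"
    unfolding deficit by (simp add: distrib_left)
  moreover have "0 \<le> sqnorm \<psi> - detect_accept est m D n A \<psi>"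
    unfolding deficit using w q by (simp add: sum_nonneg)
  ultimately show ?thesis unfolding abs_le_iff by linarith
qed

locale search_walk =
  fixes n :: nat and U2 :: "real mat" and \<phi>0 \<mu> :: "real Matrix.vec"
  assumes U2_carrier: "U2 \<in> carrier_mat n n" and U2_orthogonal: "transpose_mat U2 * U2 = 1\<^sub>m n"
    and \<phi>0_carrier: "\<phi>0 \<in> carrier_vec n" and \<phi>0_fixed: "U2 *\<^sub>v \<phi>0 = \<phi>0"
    and \<phi>0_norm: "rsqnorm \<phi>0 = 1"
    and \<phi>0_unique: "\<forall>v \<in> carrier_vec n. cmat U2 *\<^sub>v v = v \<longrightarrow> (\<exists>a::complex. v = a \<cdot>\<^sub>v cvec \<phi>0)"
    and \<mu>_carrier: "\<mu> \<in> carrier_vec n" and \<mu>_norm: "rsqnorm \<mu> = 1"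
begin

abbreviation U :: "complex mat" where "U \<equiv> cmat (U2 * U1 n \<mu>)"

abbreviation \<psi> :: "complex Matrix.vec" where "\<psi> \<equiv> cvec (phitilde \<phi>0 \<mu>)"

lemma U_mult_vec: "v \<in> carrier_vec n \<Longrightarrow> U *\<^sub>v v = cmat U2 *\<^sub>v (cmat (U1 n \<mu>) *\<^sub>v v)"
  unfolding cmat_mult[OF U2_carrier U1_carrier]
  by (rule assoc_mult_mat_vec[of _ n n _ n]) (use U2_carrier in simp_all)

lemma isometry_U: "isometry_mat n U"
  unfolding cmat_mult[OF U2_carrier U1_carrier]
  using orthogonal_cmat_isometry[OF U2_carrier U2_orthogonal]
    orthogonal_cmat_isometry[OF U1_carrier U1_orthogonal[OF \<mu>_carrier \<mu>_norm]]
  by (rule isometry_mat_mult)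

lemma \<psi>_carrier: "\<psi> \<in> carrier_vec n"
  unfolding phitilde_def using \<phi>0_carrier \<mu>_carrier by simp

lemma sqnorm_\<psi>_le_1: "sqnorm \<psi> \<le> 1"
  using rsqnorm_phitilde[OF \<mu>_carrier \<phi>0_carrier \<mu>_norm \<phi>0_norm] by (simp add: sqnorm_cvec)

text \<open>If \<open>U v = v\<close>, then, \<open>U\<^sub>2\<close> being an isometry fixing \<open>\<phi>\<^sub>0\<close>,
  \<open>\<langle>v, \<phi>\<^sub>0\<rangle> = \<langle>U\<^sub>1 v, \<phi>\<^sub>0\<rangle>\<close>, which forces \<open>\<langle>\<mu>, v\<rangle> \<langle>\<mu>, \<phi>\<^sub>0\<rangle> = 0\<close>.
  Hence \<open>U\<^sub>1 v = v\<close> is fixed by \<open>U\<^sub>2\<close>, so it is a multiple of \<open>\<phi>\<^sub>0\<close>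
  orthogonal to \<open>\<mu>\<close>, i.e. zero.\<close>

lemma no_eigenphase_0:
  assumes overlap: "scalar_prod \<mu> \<phi>0 \<noteq> 0"
  shows "0 \<notin> eigphases n U"
proof
  let ?M = "cvec \<mu>" and ?F = "cvec \<phi>0"
  assume "0 \<in> eigphases n U"
  then obtain v where "v \<in> eigspace n U 1" "v \<noteq> 0\<^sub>v n"
    using zero_in_eigspace[of U n 1] U2_carrier unfolding eigphases_def by auto
  then have v: "v \<in> carrier_vec n" "v \<noteq> 0\<^sub>v n" and Uv: "U *\<^sub>v v = v"
    unfolding eigspace_def by auto
  define w where "w = cmat (U1 n \<mu>) *\<^sub>v v"
  have w: "w = v - (2 * (?M \<bullet> v)) \<cdot>\<^sub>v ?M"
    unfolding w_def by (rule cmat_U1_mult_vec[OF \<mu>_carrier v(1)])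
  have w_carrier: "w \<in> carrier_vec n"
    unfolding w_def using mult_mat_vec_carrier[OF cmat_carrier[OF U1_carrier] v(1)] .
  have U2w: "cmat U2 *\<^sub>v w = v" using Uv U_mult_vec[OF v(1)] unfolding w_def by simp
  have U2F: "cmat U2 *\<^sub>v ?F = ?F" using cmat_mult_cvec[OF U2_carrier \<phi>0_carrier] \<phi>0_fixed by simp
  have MF: "?M \<bullet>c ?F = complex_of_real (scalar_prod \<mu> \<phi>0)"
    "?M \<bullet> ?F = complex_of_real (scalar_prod \<mu> \<phi>0)"
    using cvec_cscalar_prod[OF \<mu>_carrier \<phi>0_carrier] cvec_scalar_prod[OF \<mu>_carrier \<phi>0_carrier]
    by auto
  have "(cmat U2 *\<^sub>v w) \<bullet>c (cmat U2 *\<^sub>v ?F) = w \<bullet>c ?F"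
    by (rule isometry_mat_cscalar_prod[OF orthogonal_cmat_isometry[OF U2_carrier U2_orthogonal]
          w_carrier]) (use \<phi>0_carrier in simp)
  then have "v \<bullet>c ?F = w \<bullet>c ?F" using U2w U2F by simp
  also have "\<dots> = v \<bullet>c ?F - (2 * (?M \<bullet> v)) * (?M \<bullet>c ?F)"
    unfolding w using v \<mu>_carrier \<phi>0_carrier
    by (simp add: cscalar_prod_diff_left[of _ n] cscalar_prod_smult_left[of _ n])
  finally have Mv: "?M \<bullet> v = 0" using MF overlap by simp
  then have "w = v" unfolding w using v \<mu>_carrier by (intro eq_vecI) (auto simp: cvec_def)
  then have "cmat U2 *\<^sub>v v = v" using U2w by simp
  then obtain a where va: "v = a \<cdot>\<^sub>v ?F" using \<phi>0_unique v by blast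
  then have "?M \<bullet> v = a * complex_of_real (scalar_prod \<mu> \<phi>0)"
    using MF \<mu>_carrier \<phi>0_carrier by (simp add: scalar_prod_smult_distrib[of _ n])
  then have "a = 0" using Mv overlap by simp
  then have "v = 0\<^sub>v n" unfolding va using \<phi>0_carrier by (intro eq_vecI) (auto simp: cvec_def)
  then show False using v(2) by simp
qed

lemma \<psi>_in_eigspace_1:
  assumes orth: "scalar_prod \<mu> \<phi>0 = 0"
  shows "\<psi> \<in> eigspace n U 1"
proof -
  let ?F = "cvec \<phi>0"
  have "cmat (U1 n \<mu>) *\<^sub>v ?F = ?F - 0 \<cdot>\<^sub>v cvec \<mu>"
    using cmat_U1_mult_vec[OF \<mu>_carrier, of ?F] cvec_scalar_prod[OF \<mu>_carrier \<phi>0_carrier] orth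
      \<phi>0_carrier by simp
  also have "\<dots> = ?F" using \<phi>0_carrier \<mu>_carrier by (intro eq_vecI) (auto simp: cvec_def)
  finally have "U *\<^sub>v ?F = ?F"
    using U_mult_vec[of ?F] cmat_mult_cvec[OF U2_carrier \<phi>0_carrier] \<phi>0_fixed \<phi>0_carrier by simp
  moreover have "phitilde \<phi>0 \<mu> = \<phi>0"
    unfolding phitilde_def orth using \<phi>0_carrier \<mu>_carrier by auto
  ultimately show ?thesis unfolding eigspace_def using \<phi>0_carrier by simp
qed

lemma detect_accept_\<psi>_approx:
  assumes pe: "is_phase_estimator est cnt K" and \<epsilon>: "0 < \<epsilon>"
    and T: "max 1 (QHT n U2 \<mu> \<phi>0 \<epsilon>) \<le> T" and m: "ln (1 / \<epsilon>) \<le> real m"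
    and overlap: "scalar_prod \<mu> \<phi>0 \<noteq> 0"
  shows "\<bar>detect_accept est m (1 / T) n U \<psi> - rsqnorm (phitilde \<phi>0 \<mu>)\<bar> \<le> 2 * \<epsilon>"
proof -
  have "Inf {y. 0 \<le> y \<and> QH_tail n U \<psi> y \<le> \<epsilon>} \<le> T" using T unfolding QHT_def by simp
  then have "QH_tail n U \<psi> (1 / (1 / T)) \<le> \<epsilon>"
    using QH_tail_le_of_Inf_le[OF isometry_finite_eigphases[OF isometry_U]] \<epsilon> by simp
  then have "\<bar>detect_accept est m (1 / T) n U \<psi> - sqnorm \<psi>\<bar> \<le> \<epsilon> * (1 + sqnorm \<psi>)"
    using detect_accept_approx[OF pe _ isometry_U \<psi>_carrier no_eigenphase_0[OF overlap] \<epsilon> m] T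
    by simp
  moreover have "\<epsilon> * (1 + sqnorm \<psi>) \<le> \<epsilon> * 2"
    using \<epsilon> sqnorm_\<psi>_le_1 by (intro mult_left_mono) auto
  ultimately show ?thesis by (simp add: sqnorm_cvec)
qed

end

theorem theorem5:
  shows "\<exists>c>0. \<exists>C>0. \<forall>(est :: real \<Rightarrow> real \<Rightarrow> real pmf) (cnt :: real \<Rightarrow> nat) (K :: real).
    is_phase_estimator est cnt K \<longrightarrow>
    (\<forall>(n :: nat) (U2 :: real mat) (\<mu> :: real Matrix.vec) (\<phi>0 :: real Matrix.vec) (\<epsilon> :: real) (T :: real).
      U2 \<in> carrier_mat n n \<and> transpose_mat U2 * U2 = 1\<^sub>m n \<and>
      \<phi>0 \<in> carrier_vec n \<and> U2 *\<^sub>v \<phi>0 = \<phi>0 \<and> rsqnorm \<phi>0 = 1 \<and>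
      (\<forall>v \<in> carrier_vec n. cmat U2 *\<^sub>v v = v \<longrightarrow> (\<exists>a::complex. v = a \<cdot>\<^sub>v cvec \<phi>0)) \<and>
      \<mu> \<in> carrier_vec n \<and> rsqnorm \<mu> = 1 \<and>
      0 < \<epsilon> \<and> \<epsilon> < 1 \<and> T \<ge> max 1 (QHT n U2 \<mu> \<phi>0 \<epsilon>)
      \<longrightarrow>
      (let m = nat \<lceil>c * ln (1 / \<epsilon>)\<rceil>;
           p = detect_accept est m (1 / T) n (cmat (U2 * U1 n \<mu>)) (cvec (phitilde \<phi>0 \<mu>))
       in (scalar_prod \<mu> \<phi>0 \<noteq> 0 \<longrightarrow> \<bar>p - rsqnorm (phitilde \<phi>0 \<mu>)\<bar> \<le> C * \<epsilon>) \<and>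
          (scalar_prod \<mu> \<phi>0 = 0 \<longrightarrow> p = 0) \<and>
          real (detect_calls cnt m (1 / T)) \<le> C * K * (1 + ln (1 / \<epsilon>)) * T))"
proof (rule exI[of _ "1::real"], rule conjI, simp, rule exI[of _ "2::real"], rule conjI, simp,
    intro allI impI, elim conjE)
  fix est cnt K n U2 \<mu> \<phi>0 \<epsilon> T
  assume pe: "is_phase_estimator est cnt K"
    and walk: "U2 \<in> carrier_mat n n" "transpose_mat U2 * U2 = 1\<^sub>m n" "\<phi>0 \<in> carrier_vec n"
      "U2 *\<^sub>v \<phi>0 = \<phi>0" "rsqnorm \<phi>0 = 1"
      "\<forall>v \<in> carrier_vec n. cmat U2 *\<^sub>v v = v \<longrightarrow> (\<exists>a::complex. v = a \<cdot>\<^sub>v cvec \<phi>0)"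
      "\<mu> \<in> carrier_vec n" "rsqnorm \<mu> = 1"
    and \<epsilon>: "0 < \<epsilon>" "\<epsilon> < 1" and T: "max 1 (QHT n U2 \<mu> \<phi>0 \<epsilon>) \<le> T"
  interpret search_walk n U2 \<phi>0 \<mu> using walk by unfold_locales
  define m where "m = nat \<lceil>1 * ln (1 / \<epsilon>)\<rceil>"
  have ln: "0 \<le> ln (1 / \<epsilon>)" using \<epsilon> by simp
  then have m: "ln (1 / \<epsilon>) \<le> real m" "real m \<le> 1 + ln (1 / \<epsilon>)" unfolding m_def by linarith+
  have T_pos: "0 < T" "0 < 1 / T" using T by simp_all
  have "real (detect_calls cnt m (1 / T)) \<le> K * (1 + ln (1 / \<epsilon>)) * T"
    by (rule detect_calls_le[OF pe T_pos(1) m(2)])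
  also have "\<dots> \<le> 2 * K * (1 + ln (1 / \<epsilon>)) * T"
    using phase_estimator_const_nonneg[OF pe] T_pos ln by simp
  finally show "let m = nat \<lceil>1 * ln (1 / \<epsilon>)\<rceil>; p = detect_accept est m (1 / T) n U \<psi>
       in (scalar_prod \<mu> \<phi>0 \<noteq> 0 \<longrightarrow> \<bar>p - rsqnorm (phitilde \<phi>0 \<mu>)\<bar> \<le> 2 * \<epsilon>) \<and>
          (scalar_prod \<mu> \<phi>0 = 0 \<longrightarrow> p = 0) \<and>
          real (detect_calls cnt m (1 / T)) \<le> 2 * K * (1 + ln (1 / \<epsilon>)) * T"
    using detect_accept_\<psi>_approx[OF pe \<epsilon>(1) T m(1)]
      detect_accept_eigspace_1[OF pe T_pos(2) isometry_U \<psi>_in_eigspace_1]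
    unfolding Let_def m_def[symmetric] by blast
qed

end
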